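(* Let $S$ be an LAD-AG-groupoid. Then $S$ is an AG$^{**}$-groupoid, i.e. $a(bc)=b(ac)$ for all $a,b,c\in S$.
   Context: A groupoid is a set $S$ with a binary operation written as juxtaposition; $ab\cdot c$ means $(ab)c$ and $a\cdot bc$ means $a(bc)$. An AG-groupoid is a groupoid satisfying the left invertive law $(ab)c=(cb)a$ for all $a,b,c\in S$. An LAD-AG-groupoid (left abelian distributive AG-groupoid) is an AG-groupoid satisfying $a(bc)=(ab)(ca)$ for all $a,b,c\in S$. *)

theory Defs
  imports Main
begin

definition AG_groupoid :: "('a \<Rightarrow> 'a \<Rightarrow> 'a) \<Rightarrow> bool" where
  "AG_groupoid m \<longleftrightarrow> (\<forall>a b c. m (m a b) c = m (m c b) a)"

definition LAD_AG_groupoid :: "('a \<Rightarrow> 'a \<Rightarrow> 'a) \<Rightarrow> bool" where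
  "LAD_AG_groupoid m \<longleftrightarrow> AG_groupoid m \<and>
     (\<forall>a b c. m a (m b c) = m (m a b) (m c a))"

definition AG_star_star_groupoid :: "('a \<Rightarrow> 'a \<Rightarrow> 'a) \<Rightarrow> bool" where
  "AG_star_star_groupoid m \<longleftrightarrow> AG_groupoid m \<and>
     (\<forall>a b c. m a (m b c) = m b (m a c))"

end

theory Submission
  imports Defs
begin

text \<open>Left distributivity together with the medial law of AG-groupoids gives
  \<open>x(yz) = x(zy)\<close> and makes \<open>xx\<close> a left identity on products. The usual argument for
  AG-groupoids with a left identity \<open>e\<close>, \<open>a(bc) = (ea)(bc) = (eb)(ac) = b(ac)\<close>, then goes
  through with the two local identities \<open>aa\<close> and \<open>bb\<close>, which are exchanged by the identity
  \<open>(xy)(zz) = (zy)(xx)\<close>.\<close>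

locale ag_groupoid =
  fixes mult :: "'a \<Rightarrow> 'a \<Rightarrow> 'a"  (infixl "\<cdot>" 70)
  assumes left_invertive: "a \<cdot> b \<cdot> c = c \<cdot> b \<cdot> a"
begin

lemma medial: "(a \<cdot> b) \<cdot> (c \<cdot> d) = (a \<cdot> c) \<cdot> (b \<cdot> d)"
proof -
  have "(a \<cdot> b) \<cdot> (c \<cdot> d) = (c \<cdot> d) \<cdot> b \<cdot> a" by (rule left_invertive)
  also have "\<dots> = b \<cdot> d \<cdot> c \<cdot> a" by (simp only: left_invertive[of c d b])
  also have "\<dots> = (a \<cdot> c) \<cdot> (b \<cdot> d)" by (rule left_invertive)
  finally show ?thesis .
qed

end

locale lad_ag_groupoid = ag_groupoid +
  assumes left_distrib: "a \<cdot> (b \<cdot> c) = (a \<cdot> b) \<cdot> (c \<cdot> a)"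
begin

lemma right_factor_commute: "a \<cdot> (b \<cdot> c) = a \<cdot> (c \<cdot> b)"
proof -
  have "a \<cdot> (b \<cdot> c) = (a \<cdot> b) \<cdot> (c \<cdot> a)" by (rule left_distrib)
  also have "\<dots> = (a \<cdot> c) \<cdot> (b \<cdot> a)" by (rule medial)
  also have "\<dots> = a \<cdot> (c \<cdot> b)" by (rule left_distrib[symmetric])
  finally show ?thesis .
qed

lemma square_left_identity: "a \<cdot> a \<cdot> (b \<cdot> c) = a \<cdot> (b \<cdot> c)"
proof -
  have "a \<cdot> a \<cdot> (b \<cdot> c) = (a \<cdot> b) \<cdot> (a \<cdot> c)" by (rule medial)
  also have "\<dots> = (a \<cdot> b) \<cdot> (c \<cdot> a)" by (rule right_factor_commute)
  also have "\<dots> = a \<cdot> (b \<cdot> c)" by (rule left_distrib[symmetric])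
  finally show ?thesis .
qed

lemma left_distrib_invertive: "a \<cdot> (b \<cdot> c) = c \<cdot> a \<cdot> b \<cdot> a"
  using left_distrib[of a b c] left_invertive[of a b "c \<cdot> a"] by (rule trans)

text \<open>Unfolding \<open>(ab)(cd)\<close> by \<open>left_distrib_invertive\<close> leaves both copies of \<open>ab\<close> as
  right factors of products, where \<open>right_factor_commute\<close> may reverse them.\<close>

lemma left_factor_commute: "(a \<cdot> b) \<cdot> (c \<cdot> d) = (b \<cdot> a) \<cdot> (c \<cdot> d)"
proof -
  have "(a \<cdot> b) \<cdot> (c \<cdot> d) = d \<cdot> (a \<cdot> b) \<cdot> c \<cdot> (a \<cdot> b)" by (rule left_distrib_invertive)
  also have "\<dots> = d \<cdot> (b \<cdot> a) \<cdot> c \<cdot> (b \<cdot> a)"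
    by (simp only: right_factor_commute[of d a b] right_factor_commute[of "d \<cdot> (b \<cdot> a) \<cdot> c" a b])
  also have "\<dots> = (b \<cdot> a) \<cdot> (c \<cdot> d)" by (rule left_distrib_invertive[symmetric])
  finally show ?thesis .
qed

lemma exchange_squares: "(a \<cdot> b) \<cdot> (c \<cdot> c) = (c \<cdot> b) \<cdot> (a \<cdot> a)"
proof -
  have "(a \<cdot> b) \<cdot> (c \<cdot> c) = (a \<cdot> b) \<cdot> (a \<cdot> b) \<cdot> (c \<cdot> c)" by (rule square_left_identity[symmetric])
  also have "\<dots> = (a \<cdot> a) \<cdot> (b \<cdot> b) \<cdot> (c \<cdot> c)" by (simp only: medial[of a b a b])
  also have "\<dots> = (c \<cdot> c) \<cdot> (b \<cdot> b) \<cdot> (a \<cdot> a)" by (rule left_invertive)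
  also have "\<dots> = (c \<cdot> b) \<cdot> (c \<cdot> b) \<cdot> (a \<cdot> a)" by (simp only: medial[of c c b b])
  also have "\<dots> = (c \<cdot> b) \<cdot> (a \<cdot> a)" by (rule square_left_identity)
  finally show ?thesis .
qed

lemma left_commute: "a \<cdot> (b \<cdot> c) = b \<cdot> (a \<cdot> c)"
proof -
  have "a \<cdot> (b \<cdot> c) = (a \<cdot> a) \<cdot> (b \<cdot> c)" by (rule square_left_identity[symmetric])
  also have "\<dots> = (a \<cdot> b) \<cdot> (a \<cdot> c)" by (rule medial)
  also have "\<dots> = (b \<cdot> a) \<cdot> (c \<cdot> a)"
    by (simp only: left_factor_commute[of a b] right_factor_commute[of "b \<cdot> a" a c])
  also have "\<dots> = (b \<cdot> c) \<cdot> (a \<cdot> a)" by (rule medial)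
  also have "\<dots> = (a \<cdot> c) \<cdot> (b \<cdot> b)" by (rule exchange_squares)
  also have "\<dots> = (a \<cdot> b) \<cdot> (c \<cdot> b)" by (rule medial)
  also have "\<dots> = (b \<cdot> a) \<cdot> (b \<cdot> c)"
    by (simp only: left_factor_commute[of a b] right_factor_commute[of "b \<cdot> a" c b])
  also have "\<dots> = (b \<cdot> b) \<cdot> (a \<cdot> c)" by (rule medial)
  also have "\<dots> = b \<cdot> (a \<cdot> c)" by (rule square_left_identity)
  finally show ?thesis .
qed

end

theorem mainTheorem3:
  fixes m :: "'a \<Rightarrow> 'a \<Rightarrow> 'a"
  assumes "LAD_AG_groupoid m"
  shows "AG_star_star_groupoid m"
proof -
  interpret lad_ag_groupoid m
    using assms unfolding LAD_AG_groupoid_def AG_groupoid_def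
    by unfold_locales blast+
  show ?thesis
    unfolding AG_star_star_groupoid_def AG_groupoid_def
    using left_invertive left_commute by blast
qed

end
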